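(* Let $(\Theta,\mathcal F,\nu)$ be a measure space (with $\Theta$ discrete or continuous), and for each $\vartheta\in\Theta$ let $(V_{n,k}(\vartheta))_{1\le k\le n}$ and $(W_s(\vartheta))_{s\ge1}$ be nonnegative, measurable in $\vartheta$. Suppose that for each $n$, $\Pi_n$ is a finitely exchangeable random partition of $[n]$ whose EPPF is $$p^{(n)}(n_1,\dots,n_k)=\int_\Theta V_{n,k}(\vartheta)\prod_{j=1}^kW_{n_j}(\vartheta)\,\nu(d\vartheta)$$ (a mixture of Gibbs partitions). Then for every $n\ge1$: if $(W_s(\vartheta))_{s\ge1}$ is log-convex for each $\vartheta\in\Theta$, then $p^{(n)}$ is balance-averse; if $(W_s(\vartheta))_{s\ge1}$ is log-concave for each $\vartheta\in\Theta$, then $p^{(n)}$ is balance-seeking.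
   Context: For positive integers $k\le n$, $\mathcal I_n^k$ denotes the set of nonincreasing $k$-tuples $\mathbf n=(n_1,\dots,n_k)$ of positive integers with $\sum_jn_j=n$. For $\mathbf n,\mathbf n'\in\mathcal I_n^k$ write $\mathbf n\prec\mathbf n'$ if $\mathbf n\neq\mathbf n'$ and $\sum_{j=1}^J n_j\ge\sum_{j=1}^J n'_j$ for all $J=1,\dots,k$. The EPPF of a finitely exchangeable (i.e. permutation-invariant in law) random partition $\Pi_n$ of $[n]$ is the symmetric function $p^{(n)}$ with $\mathbb P(\Pi_n=\{S_1,\dots,S_k\})=p^{(n)}(|S_1|,\dots,|S_k|)$. It is balance-averse if for all $k\le n$ and $\mathbf n,\mathbf n'\in\mathcal I^k_n$, $\mathbf n\prec\mathbf n'$ implies $p^{(n)}(\mathbf n)\ge p^{(n)}(\mathbf n')$, and balance-seeking if it implies $p^{(n)}(\mathbf n)\le p^{(n)}(\mathbf n')$. A sequence $(W_s)_{s\ge1}$ is log-convex if $W_s^2\le W_{s-1}W_{s+1}$ for all $s\ge2$, and log-concave if $W_s^2\ge W_{s-1}W_{s+1}$ for all $s\ge2$ and it has no internal zeros (no $a<b<c$ with $W_a>0,W_b=0,W_c>0$). *)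

theory Defs
  imports "HOL-Probability.Probability" "HOL-Library.Disjoint_Sets" "HOL-Library.Multiset"
begin

definition comps :: "nat \<Rightarrow> nat \<Rightarrow> nat list set" where
  "comps n k = {ns. length ns = k \<and> sorted_wrt (\<ge>) ns \<and> (\<forall>x\<in>set ns. 0 < x) \<and> sum_list ns = n}"

definition prec :: "nat list \<Rightarrow> nat list \<Rightarrow> bool" where
  "prec ns ns' \<longleftrightarrow> ns \<noteq> ns' \<and>
     (\<forall>J\<in>{1..length ns}. sum_list (take J ns) \<ge> sum_list (take J ns'))"

definition balance_averse :: "nat \<Rightarrow> (nat list \<Rightarrow> 'b::order) \<Rightarrow> bool" where
  "balance_averse n p \<longleftrightarrow> (\<forall>k. 1 \<le> k \<and> k \<le> n \<longrightarrow>
     (\<forall>ns\<in>comps n k. \<forall>ns'\<in>comps n k. prec ns ns' \<longrightarrow> p ns \<ge> p ns'))"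

definition balance_seeking :: "nat \<Rightarrow> (nat list \<Rightarrow> 'b::order) \<Rightarrow> bool" where
  "balance_seeking n p \<longleftrightarrow> (\<forall>k. 1 \<le> k \<and> k \<le> n \<longrightarrow>
     (\<forall>ns\<in>comps n k. \<forall>ns'\<in>comps n k. prec ns ns' \<longrightarrow> p ns \<le> p ns'))"

text \<open>Sequence (W s) indexed by s \<ge> 1.\<close>
definition log_convex_seq :: "(nat \<Rightarrow> real) \<Rightarrow> bool" where
  "log_convex_seq w \<longleftrightarrow> (\<forall>s\<ge>2. (w s)^2 \<le> w (s - 1) * w (s + 1))"

definition log_concave_seq :: "(nat \<Rightarrow> real) \<Rightarrow> bool" where
  "log_concave_seq w \<longleftrightarrow> (\<forall>s\<ge>2. (w s)^2 \<ge> w (s - 1) * w (s + 1)) \<and>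
     \<not> (\<exists>a b c. 1 \<le> a \<and> a < b \<and> b < c \<and> w a > 0 \<and> w b = 0 \<and> w c > 0)"

text \<open>Block sizes of a set partition, as a list (the EPPF is symmetric, so order is immaterial).\<close>
definition block_sizes :: "'a set set \<Rightarrow> nat list" where
  "block_sizes P = sorted_list_of_multiset (image_mset card (mset_set P))"

definition is_EPPF :: "nat \<Rightarrow> nat set set pmf \<Rightarrow> (nat list \<Rightarrow> ennreal) \<Rightarrow> bool" where
  "is_EPPF n Q p \<longleftrightarrow> set_pmf Q \<subseteq> {P. partition_on {1..n} P} \<and>
     (\<forall>P. partition_on {1..n} P \<longrightarrow> ennreal (pmf Q P) = p (block_sizes P))"

definition gibbs_mix :: "'a measure \<Rightarrow> (nat \<Rightarrow> nat \<Rightarrow> 'a \<Rightarrow> real) \<Rightarrow> (nat \<Rightarrow> 'a \<Rightarrow> real)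
    \<Rightarrow> nat \<Rightarrow> nat list \<Rightarrow> ennreal" where
  "gibbs_mix \<nu> V W n ns =
     (\<integral>\<^sup>+ \<theta>. ennreal (V n (length ns) \<theta> * (\<Prod>s\<leftarrow>ns. W s \<theta>)) \<partial>\<nu>)"

end

theory Submission
  imports Defs
begin

text \<open>
  The mixing integral is monotone in its integrand, so it suffices to compare the products
  \<open>\<Prod>\<^sub>j W(n\<^sub>j)\<close> for a fixed parameter, i.e. the sums \<open>\<Sum>\<^sub>j ln W(n\<^sub>j)\<close>, along the majorization
  order. This is Karamata's inequality for the discretely convex (resp. concave) sequence
  \<open>ln W\<close>. On an interval \<open>[lo, hi]\<close> any sequence is an affine function plus a combination of
  hinges \<open>s \<mapsto> (s - t)\<^sup>+\<close> whose coefficients are the second differences, and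
  \<open>\<Sum>\<^sub>j (n\<^sub>j - t)\<^sup>+\<close> is monotone under majorization. Zeros of \<open>W\<close> cause no trouble: a nonnegative
  log-convex sequence that is positive at some \<open>s \<ge> 2\<close> is positive everywhere, and a log-concave
  one has no internal zeros, so either the smaller product vanishes or \<open>W\<close> is positive on the
  whole range of block sizes.
\<close>

lemma sum_list_sum_commute:
  "(\<Sum>x\<leftarrow>xs. \<Sum>t\<in>T. F t x) = (\<Sum>t\<in>T. \<Sum>x\<leftarrow>xs. F t x)"
  by (induction xs) (auto simp: sum.distrib)

text \<open>Natural-number subtraction \<open>s - t\<close> is the hinge \<open>(s - t)\<^sup>+\<close>.\<close>

lemma hinge_expansion:
  fixes f :: "nat \<Rightarrow> real"
  assumes "lo \<le> s" "s \<le> hi"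
  shows "f s = f lo + (f (Suc lo) - f lo) * real (s - lo)
     + (\<Sum>t\<in>{lo<..<hi}. ((f (Suc t) - f t) - (f t - f (t - 1))) * real (s - t))"
  using assms
proof (induction s rule: dec_induct)
  case base
  have "(\<Sum>t\<in>{lo<..<hi}. ((f (Suc t) - f t) - (f t - f (t - 1))) * real (lo - t)) = 0"
    by (rule sum.neutral) auto
  then show ?case by simp
next
  case (step s)
  define c where "c t = (f (Suc t) - f t) - (f t - f (t - 1))" for t
  have "(\<Sum>t\<in>{lo<..<hi}. c t * real (Suc s - t)) - (\<Sum>t\<in>{lo<..<hi}. c t * real (s - t))
       = (\<Sum>t\<in>{lo<..<hi} \<inter> {..s}. c t)"
    unfolding sum_subtractf[symmetric] right_diff_distrib[symmetric] sum.inter_restrict[OF finite_greaterThanLessThan]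
    by (intro sum.cong) (auto simp: Suc_diff_le)
  also have "{lo<..<hi} \<inter> {..s} = {Suc lo..s}"
    using step by auto
  also have "(\<Sum>t\<in>{Suc lo..s}. c t) = (f (Suc s) - f s) - (f (Suc lo) - f lo)"
    using sum_telescope''[OF step(1), of "\<lambda>t. f (Suc t) - f t"] step(1) unfolding c_def by simp
  finally show ?case
    using step by (simp add: c_def Suc_diff_le algebra_simps)
qed

lemma sum_list_hinge_expansion:
  fixes f :: "nat \<Rightarrow> real"
  assumes "\<forall>v\<in>set zs. lo \<le> v \<and> v \<le> hi"
  shows "(\<Sum>v\<leftarrow>zs. f v) = real (length zs) * f lo
     + (f (Suc lo) - f lo) * (real (sum_list zs) - real (length zs) * real lo)
     + (\<Sum>t\<in>{lo<..<hi}. ((f (Suc t) - f t) - (f t - f (t - 1))) * (\<Sum>v\<leftarrow>zs. real (v - t)))"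
proof -
  define c where "c t = (f (Suc t) - f t) - (f t - f (t - 1))" for t
  have "(\<Sum>v\<leftarrow>zs. f v) = (\<Sum>v\<leftarrow>zs. f lo + (f (Suc lo) - f lo) * (real v - real lo)
      + (\<Sum>t\<in>{lo<..<hi}. c t * real (v - t)))"
    using assms by (intro arg_cong[where f = sum_list] map_cong refl)
      (subst hinge_expansion[of lo _ hi], auto simp: c_def)
  also have "\<dots> = real (length zs) * f lo
     + (f (Suc lo) - f lo) * (real (sum_list zs) - real (length zs) * real lo)
     + (\<Sum>t\<in>{lo<..<hi}. c t * (\<Sum>v\<leftarrow>zs. real (v - t)))"
    by (simp add: sum_list_addf sum_list_const_mult sum_list_subtractf sum_list_triv
        sum_list_sum_commute sum_list_of_nat)
  finally show ?thesis unfolding c_def .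
qed

lemma prefix_sum_le_hinge_sum:
  assumes "J \<le> length zs"
  shows "real (sum_list (take J zs)) - real J * real t \<le> (\<Sum>v\<leftarrow>zs. real (v - t))"
  using assms
proof (induction zs arbitrary: J)
  case Nil
  then show ?case by simp
next
  case (Cons a zs)
  show ?case
  proof (cases J)
    case 0
    have "0 \<le> (\<Sum>v\<leftarrow>a # zs. real (v - t))"
      by (intro sum_list_nonneg) auto
    then show ?thesis
      using 0 by simp
  next
    case (Suc J')
    then have "real (sum_list (take J' zs)) - real J' * real t \<le> (\<Sum>v\<leftarrow>zs. real (v - t))"
      using Cons by simp
    moreover have "real a - real t \<le> real (a - t)"
      by simp
    ultimately show ?thesis
      using Suc by (simp add: algebra_simps)
  qed
qed

text \<open>For a nonincreasing list the bound is attained at the number of entries exceeding \<open>t\<close>.\<close>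

lemma sorted_hinge_sum_eq_prefix_sum:
  assumes "sorted_wrt (\<ge>) ys"
  obtains J where "J \<le> length ys"
    "(\<Sum>v\<leftarrow>ys. real (v - t)) = real (sum_list (take J ys)) - real J * real t"
  using assms
proof (induction ys arbitrary: thesis)
  case Nil
  then show ?case by simp
next
  case (Cons a ys)
  show ?case
  proof (cases "t < a")
    case True
    obtain J where "J \<le> length ys"
      "(\<Sum>v\<leftarrow>ys. real (v - t)) = real (sum_list (take J ys)) - real J * real t"
      using Cons.IH Cons.prems(2) by auto
    then show ?thesis
      using True by (intro Cons.prems(1)[of "Suc J"]) (auto simp: of_nat_diff algebra_simps)
  next
    case False
    then have "\<forall>v\<in>set (a # ys). v \<le> t"
      using Cons.prems(2) by auto
    then have "map (\<lambda>v. real (v - t)) (a # ys) = map (\<lambda>v. 0) (a # ys)"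
      by simp
    then have "(\<Sum>v\<leftarrow>a # ys. real (v - t)) = 0"
      by (simp only: sum_list_0)
    then show ?thesis
      by (intro Cons.prems(1)[of 0]) auto
  qed
qed

definition majorizes :: "nat list \<Rightarrow> nat list \<Rightarrow> bool" where
  "majorizes xs ys \<longleftrightarrow> length xs = length ys \<and> sum_list xs = sum_list ys \<and>
     (\<forall>J\<le>length ys. sum_list (take J ys) \<le> sum_list (take J xs))"

lemma hinge_sum_mono_majorizes:
  assumes "majorizes xs ys" "sorted_wrt (\<ge>) ys"
  shows "(\<Sum>v\<leftarrow>ys. real (v - t)) \<le> (\<Sum>v\<leftarrow>xs. real (v - t))"
proof -
  obtain J where J: "J \<le> length ys"
    "(\<Sum>v\<leftarrow>ys. real (v - t)) = real (sum_list (take J ys)) - real J * real t"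
    using sorted_hinge_sum_eq_prefix_sum[OF assms(2)] .
  have "sum_list (take J ys) \<le> sum_list (take J xs)" "J \<le> length xs"
    using assms(1) J(1) unfolding majorizes_def by auto
  then show ?thesis
    using J(2) prefix_sum_le_hinge_sum[of J xs t] by simp
qed

lemma karamata_nat:
  fixes f :: "nat \<Rightarrow> real"
  assumes "majorizes xs ys" "sorted_wrt (\<ge>) ys"
    and range: "\<forall>v\<in>set xs \<union> set ys. lo \<le> v \<and> v \<le> hi"
    and convex: "\<And>t. lo < t \<Longrightarrow> t < hi \<Longrightarrow> f t - f (t - 1) \<le> f (Suc t) - f t"
  shows "(\<Sum>v\<leftarrow>ys. f v) \<le> (\<Sum>v\<leftarrow>xs. f v)"
proof -
  have "(\<Sum>t\<in>{lo<..<hi}. ((f (Suc t) - f t) - (f t - f (t - 1))) * (\<Sum>v\<leftarrow>ys. real (v - t)))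
      \<le> (\<Sum>t\<in>{lo<..<hi}. ((f (Suc t) - f t) - (f t - f (t - 1))) * (\<Sum>v\<leftarrow>xs. real (v - t)))"
    using convex by (intro sum_mono mult_left_mono hinge_sum_mono_majorizes assms) force+
  moreover have "length xs = length ys" "sum_list xs = sum_list ys"
    using assms(1) unfolding majorizes_def by auto
  ultimately show ?thesis
    using range by (simp add: sum_list_hinge_expansion[of _ lo hi])
qed

lemma prod_list_le_if_majorizes:
  fixes w :: "nat \<Rightarrow> real"
  assumes "majorizes xs ys" "sorted_wrt (\<ge>) ys"
    and range: "\<forall>v\<in>set xs \<union> set ys. lo \<le> v \<and> v \<le> hi"
    and pos: "\<And>v. lo \<le> v \<Longrightarrow> v \<le> hi \<Longrightarrow> 0 < w v"
    and log_convex: "\<And>t. lo < t \<Longrightarrow> t < hi \<Longrightarrow> (w t)\<^sup>2 \<le> w (t - 1) * w (t + 1)"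
  shows "(\<Prod>v\<leftarrow>ys. w v) \<le> (\<Prod>v\<leftarrow>xs. w v)"
proof -
  have exp_ln: "(\<Prod>v\<leftarrow>zs. w v) = exp (\<Sum>v\<leftarrow>zs. ln (w v))"
    if "\<forall>v\<in>set zs. lo \<le> v \<and> v \<le> hi" for zs
    using that pos by (induction zs) (auto simp: exp_add)
  have "(\<Sum>v\<leftarrow>ys. ln (w v)) \<le> (\<Sum>v\<leftarrow>xs. ln (w v))"
  proof (rule karamata_nat[OF assms(1,2) range])
    fix t
    assume t: "lo < t" "t < hi"
    then have w_pos: "0 < w (t - 1)" "0 < w t" "0 < w (Suc t)"
      using pos by auto
    have "ln ((w t)\<^sup>2) \<le> ln (w (t - 1) * w (Suc t))"
      using log_convex[OF t] w_pos by simp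
    then have "2 * ln (w t) \<le> ln (w (t - 1)) + ln (w (Suc t))"
      using w_pos by (simp add: ln_mult ln_realpow)
    then show "ln (w t) - ln (w (t - 1)) \<le> ln (w (Suc t)) - ln (w t)"
      by simp
  qed
  then show ?thesis
    using range by (simp add: exp_ln)
qed

lemma prod_list_ge_if_majorizes:
  fixes w :: "nat \<Rightarrow> real"
  assumes "majorizes xs ys" "sorted_wrt (\<ge>) ys"
    and range: "\<forall>v\<in>set xs \<union> set ys. lo \<le> v \<and> v \<le> hi"
    and pos: "\<And>v. lo \<le> v \<Longrightarrow> v \<le> hi \<Longrightarrow> 0 < w v"
    and log_concave: "\<And>t. lo < t \<Longrightarrow> t < hi \<Longrightarrow> w (t - 1) * w (t + 1) \<le> (w t)\<^sup>2"
  shows "(\<Prod>v\<leftarrow>xs. w v) \<le> (\<Prod>v\<leftarrow>ys. w v)"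
proof -
  have prod_pos: "0 < (\<Prod>v\<leftarrow>zs. w v)" and prod_inverse:
    "(\<Prod>v\<leftarrow>zs. inverse (w v)) = inverse (\<Prod>v\<leftarrow>zs. w v)"
    if "\<forall>v\<in>set zs. lo \<le> v \<and> v \<le> hi" for zs
    using that pos by (induction zs) (auto simp: inverse_mult_distrib)
  have "(\<Prod>v\<leftarrow>ys. inverse (w v)) \<le> (\<Prod>v\<leftarrow>xs. inverse (w v))"
  proof (rule prod_list_le_if_majorizes[OF assms(1-3)])
    fix t
    assume t: "lo < t" "t < hi"
    then have "0 < w (t - 1) * w (t + 1)"
      using pos by auto
    then show "(inverse (w t))\<^sup>2 \<le> inverse (w (t - 1)) * inverse (w (t + 1))"
      using le_imp_inverse_le[OF log_concave[OF t]] by (simp add: power_inverse inverse_mult_distrib)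
  qed (use pos in auto)
  then show ?thesis
    using range prod_pos by (simp add: prod_inverse)
qed

lemma sorted_wrt_ge_last_le_hd:
  assumes "sorted_wrt (\<ge>) (xs :: nat list)" "v \<in> set xs"
  shows "last xs \<le> v \<and> v \<le> hd xs"
  using assms
proof (induction xs)
  case Nil
  then show ?case by simp
next
  case (Cons a xs)
  then show ?case
    by (cases "xs = []") (auto dest: last_in_set)
qed

lemma sum_list_eq_length_imp_replicate:
  assumes "\<forall>v\<in>set xs. 0 < v" "sum_list xs = length (xs :: nat list)"
  shows "xs = replicate (length xs) 1"
proof -
  have "sum_list xs = length xs + (\<Sum>v\<leftarrow>xs. v - 1)"
    using assms(1) by (induction xs) auto
  then have "\<forall>v\<in>set xs. v = 1"
    using assms by (fastforce simp: le_Suc_eq)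
  then show ?thesis
    by (simp add: replicate_length_same)
qed

lemma prec_imp_majorizes:
  assumes "ns \<in> comps n k" "ns' \<in> comps n k" "prec ns ns'"
  shows "majorizes ns ns'"
  using assms unfolding comps_def prec_def majorizes_def
  by (auto simp: Suc_le_eq elim!: allE[of _ 0])

lemma prec_range:
  assumes ns: "ns \<in> comps n k" and ns': "ns' \<in> comps n k" and prec: "prec ns ns'"
  shows "ns \<noteq> []" "1 \<le> last ns" "\<forall>v\<in>set ns \<union> set ns'. last ns \<le> v \<and> v \<le> hd ns"
proof -
  have len: "length ns = k" "length ns' = k" and sum: "sum_list ns = sum_list ns'"
    and sorted: "sorted_wrt (\<ge>) ns" "sorted_wrt (\<ge>) ns'" and pos: "\<forall>v\<in>set ns. 0 < v"
    using ns ns' unfolding comps_def by auto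
  then have prefix: "sum_list (take J ns') \<le> sum_list (take J ns)" if "1 \<le> J" "J \<le> k" for J
    using prec that unfolding prec_def by auto
  show "ns \<noteq> []"
    using prec len unfolding prec_def by auto
  then have ne': "ns' \<noteq> []"
    using len by auto
  show "1 \<le> last ns"
    using pos \<open>ns \<noteq> []\<close> by (simp add: Suc_le_eq)
  have "hd ns' \<le> hd ns"
    using prefix[of 1] len \<open>ns \<noteq> []\<close> ne' by (cases ns; cases ns') auto
  moreover have "last ns \<le> last ns'"
  proof -
    have split_last: "sum_list zs = sum_list (take (length zs - 1) zs) + last zs"
      if "zs \<noteq> []" for zs :: "nat list"
      using that by (metis append_butlast_last_id butlast_conv_take sum_list_append
          sum_list.Cons sum_list.Nil add_0_right)
    have "sum_list (take (k - 1) ns') \<le> sum_list (take (k - 1) ns)"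
      using prefix[of "k - 1"] by (cases "k \<le> 1") auto
    then show ?thesis
      using split_last[OF \<open>ns \<noteq> []\<close>] split_last[OF ne'] sum len by simp
  qed
  ultimately show "\<forall>v\<in>set ns \<union> set ns'. last ns \<le> v \<and> v \<le> hd ns"
    using sorted_wrt_ge_last_le_hd[OF sorted(1)] sorted_wrt_ge_last_le_hd[OF sorted(2)]
    by fastforce
qed

lemma log_convex_seq_pos:
  fixes w :: "nat \<Rightarrow> real"
  assumes log_convex: "log_convex_seq w" and nonneg: "\<And>s. 1 \<le> s \<Longrightarrow> 0 \<le> w s"
    and "2 \<le> s" "0 < w s" "1 \<le> t"
  shows "0 < w t"
proof -
  have neighbours_pos: "0 < w (u - 1) \<and> 0 < w (u + 1)" if "2 \<le> u" "0 < w u" for u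
  proof -
    have "0 < (w u)\<^sup>2"
      using that by simp
    also have "\<dots> \<le> w (u - 1) * w (u + 1)"
      using log_convex that unfolding log_convex_seq_def by auto
    finally show ?thesis
      using nonneg[of "u - 1"] nonneg[of "u + 1"] that by (auto simp: zero_less_mult_iff)
  qed
  show ?thesis
  proof (cases "s \<le> t")
    case True
    then show ?thesis
      by (induction t rule: dec_induct) (use assms neighbours_pos in auto)
  next
    case False
    then have "t \<le> s"
      by simp
    then show ?thesis
    proof (induction t rule: inc_induct)
      case (step m)
      then show ?case
        using neighbours_pos[of "Suc m"] \<open>1 \<le> t\<close> by simp
    qed (use assms in simp_all)
  qed
qed

lemma log_concave_seq_pos_between:
  fixes w :: "nat \<Rightarrow> real"
  assumes "log_concave_seq w" and nonneg: "\<And>s. 1 \<le> s \<Longrightarrow> 0 \<le> w s"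
    and "1 \<le> a" "a \<le> b" "b \<le> c" "0 < w a" "0 < w c"
  shows "0 < w b"
proof -
  have "w b \<noteq> 0"
    using assms unfolding log_concave_seq_def
    by (cases "b = a \<or> b = c") (auto simp: order.order_iff_strict)
  moreover have "0 \<le> w b"
    using nonneg assms by simp
  ultimately show ?thesis
    by simp
qed

lemma prod_list_le_if_prec_log_convex:
  fixes w :: "nat \<Rightarrow> real"
  assumes log_convex: "log_convex_seq w" and nonneg: "\<And>s. 1 \<le> s \<Longrightarrow> 0 \<le> w s"
    and ns: "ns \<in> comps n k" and ns': "ns' \<in> comps n k" and prec: "prec ns ns'"
  shows "(\<Prod>v\<leftarrow>ns'. w v) \<le> (\<Prod>v\<leftarrow>ns. w v)"
proof (cases "\<exists>v\<in>set ns'. w v = 0")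
  case True
  then have "(\<Prod>v\<leftarrow>ns'. w v) = 0"
    by (force simp: prod_list_zero_iff)
  moreover have "0 \<le> (\<Prod>v\<leftarrow>ns. w v)"
    using ns nonneg by (intro prod_list_nonneg) (auto simp: comps_def Suc_le_eq)
  ultimately show ?thesis
    by simp
next
  case False
  have "\<exists>s\<in>set ns'. 2 \<le> s"
  proof (rule ccontr)
    assume "\<not> ?thesis"
    then have "\<forall>v\<in>set ns'. v = 1"
      using ns' unfolding comps_def by force
    then have ns'_ones: "ns' = replicate k 1"
      using ns' replicate_length_same[of ns' 1] unfolding comps_def by auto
    then have "sum_list ns = length ns"
      using ns ns' unfolding comps_def by (auto simp: sum_list_replicate)
    then have "ns = replicate k 1"
      using sum_list_eq_length_imp_replicate[of ns] ns unfolding comps_def by simp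
    then show False
      using prec ns'_ones unfolding prec_def by simp
  qed
  then obtain s where "s \<in> set ns'" "2 \<le> s"
    by blast
  then have pos: "0 < w t" if "1 \<le> t" for t
    using log_convex_seq_pos[OF log_convex nonneg] False nonneg[of s] that by force
  show ?thesis
  proof (rule prod_list_le_if_majorizes[OF prec_imp_majorizes[OF ns ns' prec] _ prec_range(3)[OF ns ns' prec]])
    show "sorted_wrt (\<ge>) ns'"
      using ns' unfolding comps_def by simp
    show "0 < w v" if "last ns \<le> v" for v
      using pos prec_range(2)[OF ns ns' prec] that by simp
    show "(w t)\<^sup>2 \<le> w (t - 1) * w (t + 1)" if "last ns < t" for t
      using log_convex prec_range(2)[OF ns ns' prec] that unfolding log_convex_seq_def by simp
  qed
qed

lemma prod_list_le_if_prec_log_concave: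
  fixes w :: "nat \<Rightarrow> real"
  assumes log_concave: "log_concave_seq w" and nonneg: "\<And>s. 1 \<le> s \<Longrightarrow> 0 \<le> w s"
    and ns: "ns \<in> comps n k" and ns': "ns' \<in> comps n k" and prec: "prec ns ns'"
  shows "(\<Prod>v\<leftarrow>ns. w v) \<le> (\<Prod>v\<leftarrow>ns'. w v)"
proof (cases "\<exists>v\<in>set ns. w v = 0")
  case True
  then have "(\<Prod>v\<leftarrow>ns. w v) = 0"
    by (force simp: prod_list_zero_iff)
  moreover have "0 \<le> (\<Prod>v\<leftarrow>ns'. w v)"
    using ns' nonneg by (intro prod_list_nonneg) (auto simp: comps_def Suc_le_eq)
  ultimately show ?thesis
    by simp
next
  case False
  note range = prec_range[OF ns ns' prec]
  have ends: "last ns \<in> set ns" "hd ns \<in> set ns"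
    using range(1) by auto
  then have "1 \<le> hd ns"
    using range(2,3) by (meson UnI1 order.trans)
  then have "0 < w (last ns)" "0 < w (hd ns)"
    using False ends nonneg[of "last ns"] nonneg[of "hd ns"] range(2) by force+
  then have pos: "0 < w v" if "last ns \<le> v" "v \<le> hd ns" for v
    using log_concave_seq_pos_between[OF log_concave nonneg] range(2) that by blast
  show ?thesis
  proof (rule prod_list_ge_if_majorizes[OF prec_imp_majorizes[OF ns ns' prec] _ range(3) pos])
    show "sorted_wrt (\<ge>) ns'"
      using ns' unfolding comps_def by simp
    show "w (t - 1) * w (t + 1) \<le> (w t)\<^sup>2" if "last ns < t" for t
      using log_concave range(2) that unfolding log_concave_seq_def by simp
  qed
qed

lemma gibbs_mix_mono:
  assumes "\<And>\<theta>. \<theta> \<in> space \<nu> \<Longrightarrow> 0 \<le> V n k \<theta>" "length ns = k" "length ns' = k"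
    and "\<And>\<theta>. \<theta> \<in> space \<nu> \<Longrightarrow> (\<Prod>s\<leftarrow>ns. W s \<theta>) \<le> (\<Prod>s\<leftarrow>ns'. W s \<theta>)"
  shows "gibbs_mix \<nu> V W n ns \<le> gibbs_mix \<nu> V W n ns'"
  unfolding gibbs_mix_def using assms by (auto intro!: nn_integral_mono ennreal_leI mult_left_mono)

theorem theorem3p5:
  fixes \<nu> :: "'a measure"
    and V :: "nat \<Rightarrow> nat \<Rightarrow> 'a \<Rightarrow> real"
    and W :: "nat \<Rightarrow> 'a \<Rightarrow> real"
    and Q :: "nat \<Rightarrow> nat set set pmf"
    and n :: nat
  assumes V_meas: "\<And>n k. 1 \<le> k \<Longrightarrow> k \<le> n \<Longrightarrow> V n k \<in> borel_measurable \<nu>"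
    and V_nonneg: "\<And>n k \<theta>. 1 \<le> k \<Longrightarrow> k \<le> n \<Longrightarrow> \<theta> \<in> space \<nu> \<Longrightarrow> V n k \<theta> \<ge> 0"
    and W_meas: "\<And>s. 1 \<le> s \<Longrightarrow> W s \<in> borel_measurable \<nu>"
    and W_nonneg: "\<And>s \<theta>. 1 \<le> s \<Longrightarrow> \<theta> \<in> space \<nu> \<Longrightarrow> W s \<theta> \<ge> 0"
    and EPPF: "\<And>m. 1 \<le> m \<Longrightarrow> is_EPPF m (Q m) (gibbs_mix \<nu> V W m)"
    and n: "1 \<le> n"
  shows "((\<forall>\<theta>\<in>space \<nu>. log_convex_seq (\<lambda>s. W s \<theta>)) \<longrightarrow> balance_averse n (gibbs_mix \<nu> V W n))
       \<and> ((\<forall>\<theta>\<in>space \<nu>. log_concave_seq (\<lambda>s. W s \<theta>)) \<longrightarrow> balance_seeking n (gibbs_mix \<nu> V W n))"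
proof (intro conjI impI)
  have length: "length ns = k" if "ns \<in> comps n k" for ns k
    using that unfolding comps_def by simp
  show "balance_averse n (gibbs_mix \<nu> V W n)" if "\<forall>\<theta>\<in>space \<nu>. log_convex_seq (\<lambda>s. W s \<theta>)"
    unfolding balance_averse_def
    using that V_nonneg W_nonneg length
    by (auto intro!: gibbs_mix_mono prod_list_le_if_prec_log_convex)
  show "balance_seeking n (gibbs_mix \<nu> V W n)" if "\<forall>\<theta>\<in>space \<nu>. log_concave_seq (\<lambda>s. W s \<theta>)"
    unfolding balance_seeking_def
    using that V_nonneg W_nonneg length
    by (auto intro!: gibbs_mix_mono prod_list_le_if_prec_log_concave)
qed

end
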